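(* Let $X$ and $Y$ be completely regular Hausdorff spaces and let $c: X\times Y\to\mathbb{R}$ be a bounded function with property (H). Set $$A:=\{\phi^{c\bar c}+\inf_Y\phi^c:\ \phi\in C_b(X)\}\subseteq C_b(X),\qquad B:=\{\phi^{c}-\inf_Y\phi^c:\ \phi\in C_b(X)\}\subseteq C_b(Y).$$ Then the closures $\overline{A}^{\mathcal{T}_p}$ (in $(C_b(X),\mathcal{T}_p)$) and $\overline{B}^{\mathcal{T}_p}$ (in $(C_b(Y),\mathcal{T}_p)$) are uniformly bounded and equicontinuous, i.e. $\overline{A}^{\mathcal{T}_p}\in\mathcal{E}(X)$ and $\overline{B}^{\mathcal{T}_p}\in\mathcal{E}(Y)$. In particular they are compact in $(C_b(X),\mathcal{T}_p)$ and $(C_b(Y),\mathcal{T}_p)$ respectively, and $\overline{A}^{\mathcal{T}_p}\times\overline{B}^{\mathcal{T}_p}$ is compact in the product space $(C_b(X),\mathcal{T}_p)\times(C_b(Y),\mathcal{T}_p)$.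
   Context: $C_b(Z)$ denotes the space of real-valued bounded continuous functions on $Z$; $\mathcal{T}_p$ is the topology of pointwise convergence on $C_b(Z)$; $\mathcal{E}(Z)$ is the family of uniformly bounded equicontinuous subsets of $C_b(Z)$. For $\xi: X\to\mathbb{R}$, $\xi^c(y):=\inf_{x\in X}\{c(x,y)-\xi(x)\}$; for $\zeta:Y\to\mathbb{R}$, $\zeta^{\bar c}(x):=\inf_{y\in Y}\{c(x,y)-\zeta(y)\}$; $\phi^{c\bar c}:=(\phi^c)^{\bar c}$. Define $\overline{d}_c(x,x'):=\sup_{y\in Y}|c(x,y)-c(x',y)|$ and $\underline{d}_c(y,y'):=\sup_{x\in X}|c(x,y)-c(x,y')|$. The function $c$ has property (H) if for every $x_0\in X$, $\lim_{x\to x_0}\overline{d}_c(x,x_0)=0$, and for every $y_0\in Y$, $\lim_{y\to y_0}\underline{d}_c(y,y_0)=0$ (limits in the topologies of $X$ and $Y$). *)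

theory Defs
  imports "HOL-Analysis.Analysis"
begin

text \<open>C_b(Z): real-valued bounded continuous functions on the topological space Z,
  represented extensionally (value undefined outside topspace Z), so that they are
  points of the product space R^(topspace Z).\<close>
definition Cb :: "'a topology \<Rightarrow> ('a \<Rightarrow> real) set" where
  "Cb Z = {f. f \<in> extensional (topspace Z) \<and> continuous_map Z euclideanreal f
              \<and> (\<exists>M. \<forall>z\<in>topspace Z. \<bar>f z\<bar> \<le> M)}"

definition Tp :: "'a topology \<Rightarrow> ('a \<Rightarrow> real) topology" where
  "Tp Z = subtopology (product_topology (\<lambda>_. euclideanreal) (topspace Z)) (Cb Z)"

definition unif_bdd_equicont :: "'a topology \<Rightarrow> ('a \<Rightarrow> real) set \<Rightarrow> bool" where
  "unif_bdd_equicont Z F \<longleftrightarrow> F \<subseteq> Cb Z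
     \<and> (\<exists>M. \<forall>f\<in>F. \<forall>z\<in>topspace Z. \<bar>f z\<bar> \<le> M)
     \<and> (\<forall>z0\<in>topspace Z. \<forall>e>0. \<exists>U. openin Z U \<and> z0 \<in> U \<and>
            (\<forall>f\<in>F. \<forall>z\<in>U. \<bar>f z - f z0\<bar> < e))"

definition ctrans :: "'a topology \<Rightarrow> 'b topology \<Rightarrow> ('a \<Rightarrow> 'b \<Rightarrow> real) \<Rightarrow> ('a \<Rightarrow> real) \<Rightarrow> 'b \<Rightarrow> real" where
  "ctrans X Y c \<xi> = (\<lambda>y\<in>topspace Y. Inf {c x y - \<xi> x | x. x \<in> topspace X})"

definition cbtrans :: "'a topology \<Rightarrow> 'b topology \<Rightarrow> ('a \<Rightarrow> 'b \<Rightarrow> real) \<Rightarrow> ('b \<Rightarrow> real) \<Rightarrow> 'a \<Rightarrow> real" where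
  "cbtrans X Y c \<zeta> = (\<lambda>x\<in>topspace X. Inf {c x y - \<zeta> y | y. y \<in> topspace Y})"

definition dbar :: "'b topology \<Rightarrow> ('a \<Rightarrow> 'b \<Rightarrow> real) \<Rightarrow> 'a \<Rightarrow> 'a \<Rightarrow> real" where
  "dbar Y c x x' = Sup {\<bar>c x y - c x' y\<bar> | y. y \<in> topspace Y}"

definition dunder :: "'a topology \<Rightarrow> ('a \<Rightarrow> 'b \<Rightarrow> real) \<Rightarrow> 'b \<Rightarrow> 'b \<Rightarrow> real" where
  "dunder X c y y' = Sup {\<bar>c x y - c x y'\<bar> | x. x \<in> topspace X}"

definition propH :: "'a topology \<Rightarrow> 'b topology \<Rightarrow> ('a \<Rightarrow> 'b \<Rightarrow> real) \<Rightarrow> bool" where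
  "propH X Y c \<longleftrightarrow>
     (\<forall>x0\<in>topspace X. limitin euclideanreal (\<lambda>x. dbar Y c x x0) 0 (atin X x0)) \<and>
     (\<forall>y0\<in>topspace Y. limitin euclideanreal (\<lambda>y. dunder X c y y0) 0 (atin Y y0))"

end

theory Submission
  imports Defs
begin

text \<open>A c-transform \<open>\<psi> = \<phi>\<^sup>c\<close> is an infimum of the functions \<open>y \<mapsto> c x y - \<phi> x\<close>, so it
  inherits their common modulus \<open>|\<psi> y - \<psi> y'| \<le> dunder X c y y'\<close> and oscillates by at most
  \<open>2 sup |c|\<close>; hence \<open>\<psi> - inf \<psi>\<close> takes values in \<open>[0, 2 sup |c|]\<close>. Moreover
  \<open>cbtrans (\<phi>\<^sup>c) + inf \<phi>\<^sup>c\<close> is the cbar-transform of \<open>\<phi>\<^sup>c - inf \<phi>\<^sup>c\<close>, hence bounded by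
  \<open>3 sup |c|\<close> with modulus \<open>dbar Y c\<close>. So each family lies in a set of functions with a common
  bound and a common modulus that vanishes at the diagonal by property (H). Such a set is closed
  in the product topology, compact by Tychonoff, and consists of bounded continuous functions;
  it therefore contains the pointwise closure of the family, which is consequently equicontinuous
  and compact.\<close>

definition bounded_modulus_family :: "'a topology \<Rightarrow> real \<Rightarrow> ('a \<Rightarrow> 'a \<Rightarrow> real) \<Rightarrow> ('a \<Rightarrow> real) set"
  where "bounded_modulus_family Z R d =
    {f \<in> (\<Pi>\<^sub>E z\<in>topspace Z. {-R..R}). \<forall>z\<in>topspace Z. \<forall>z0\<in>topspace Z. \<bar>f z - f z0\<bar> \<le> d z z0}"

lemma closedin_bounded_modulus_family:
  "closedin (product_topology (\<lambda>_. euclideanreal) (topspace Z)) (bounded_modulus_family Z R d)"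
proof -
  define P where "P = product_topology (\<lambda>_. euclideanreal) (topspace Z)"
  define C where "C = (\<lambda>(z, z0). {f \<in> topspace P. \<bar>f z - f z0\<bar> \<le> d z z0})"
  have box: "closedin P (\<Pi>\<^sub>E z\<in>topspace Z. {-R..R})"
    unfolding P_def closedin_product_topology by simp
  have closed: "closedin P (C (z, z0))" if "z \<in> topspace Z" "z0 \<in> topspace Z" for z z0
  proof -
    have "continuous_map P euclideanreal (\<lambda>f. \<bar>f z - f z0\<bar>)"
      unfolding P_def using that
      by (intro continuous_map_real_abs continuous_map_diff continuous_map_product_projection)
    from closedin_continuous_map_preimage[OF this, of "{..d z z0}"]
    show ?thesis by (simp add: C_def)
  qed
  have "closedin P ((\<Pi>\<^sub>E z\<in>topspace Z. {-R..R}) \<inter> \<Inter> (C ` (topspace Z \<times> topspace Z)))"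
  proof (cases "topspace Z = {}")
    case False
    with closed box show ?thesis by (intro closedin_Int closedin_INT) auto
  qed (use box in simp)
  moreover have "topspace P = extensional (topspace Z)"
    by (simp add: P_def PiE_def)
  then have "bounded_modulus_family Z R d
      = (\<Pi>\<^sub>E z\<in>topspace Z. {-R..R}) \<inter> \<Inter> (C ` (topspace Z \<times> topspace Z))"
    unfolding bounded_modulus_family_def C_def by (auto simp: PiE_def)
  ultimately show ?thesis by (simp add: P_def)
qed

lemma compactin_bounded_modulus_family:
  "compactin (product_topology (\<lambda>_. euclideanreal) (topspace Z)) (bounded_modulus_family Z R d)"
proof (rule closed_compactin[OF _ _ closedin_bounded_modulus_family])
  show "compactin (product_topology (\<lambda>_. euclideanreal) (topspace Z)) (\<Pi>\<^sub>E z\<in>topspace Z. {-R..R})"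
    by (simp add: compactin_PiE)
  show "bounded_modulus_family Z R d \<subseteq> (\<Pi>\<^sub>E z\<in>topspace Z. {-R..R})"
    by (auto simp: bounded_modulus_family_def)
qed

lemma bounded_modulus_family_equicontinuous_at:
  assumes "limitin euclideanreal (\<lambda>z. d z z0) 0 (atin Z z0)" and "z0 \<in> topspace Z" and "e > 0"
  shows "\<exists>U. openin Z U \<and> z0 \<in> U \<and> (\<forall>f\<in>bounded_modulus_family Z R d. \<forall>z\<in>U. \<bar>f z - f z0\<bar> < e)"
proof -
  have "\<forall>\<^sub>F z in atin Z z0. \<bar>d z z0\<bar> < e"
    using assms(1,3) by (simp add: tendsto_iff)
  then obtain U where U: "openin Z U" "z0 \<in> U" "\<forall>z\<in>U - {z0}. \<bar>d z z0\<bar> < e"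
    using assms(2) by (auto simp: eventually_atin)
  have "\<bar>f z - f z0\<bar> < e" if "f \<in> bounded_modulus_family Z R d" "z \<in> U" for f z
  proof (cases "z = z0")
    case False
    with that U have "z \<in> topspace Z" "\<bar>d z z0\<bar> < e"
      using openin_subset by auto
    with that assms(2) show ?thesis
      unfolding bounded_modulus_family_def by fastforce
  qed (use assms(3) in simp)
  with U show ?thesis by blast
qed

lemma bounded_modulus_family_subset_Cb:
  assumes "\<forall>z0\<in>topspace Z. limitin euclideanreal (\<lambda>z. d z z0) 0 (atin Z z0)"
  shows "bounded_modulus_family Z R d \<subseteq> Cb Z"
proof
  fix f assume f: "f \<in> bounded_modulus_family Z R d"
  have "limitin euclideanreal f (f z0) (atin Z z0)" if z0: "z0 \<in> topspace Z" for z0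
  proof -
    have "\<forall>\<^sub>F z in atin Z z0. dist (f z) (f z0) < e" if "e > 0" for e
    proof -
      obtain U where "openin Z U" "z0 \<in> U"
          "\<forall>g\<in>bounded_modulus_family Z R d. \<forall>z\<in>U. \<bar>g z - g z0\<bar> < e"
        using bounded_modulus_family_equicontinuous_at[OF _ z0 \<open>e > 0\<close>] assms z0 by metis
      with f show ?thesis
        unfolding eventually_atin dist_real_def by blast
    qed
    then show ?thesis by (simp add: tendsto_iff)
  qed
  then have "continuous_map Z euclideanreal f"
    by (simp add: continuous_map_atin)
  with f show "f \<in> Cb Z"
    unfolding bounded_modulus_family_def Cb_def by (auto simp: PiE_def Pi_iff abs_le_iff intro!: exI[of _ R])
qed

lemma unif_bdd_equicont_bounded_modulus_family:
  assumes "\<forall>z0\<in>topspace Z. limitin euclideanreal (\<lambda>z. d z z0) 0 (atin Z z0)"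
  shows "unif_bdd_equicont Z (bounded_modulus_family Z R d)"
  unfolding unif_bdd_equicont_def
proof (intro conjI ballI allI impI)
  show "bounded_modulus_family Z R d \<subseteq> Cb Z"
    using bounded_modulus_family_subset_Cb assms .
  show "\<exists>M. \<forall>f\<in>bounded_modulus_family Z R d. \<forall>z\<in>topspace Z. \<bar>f z\<bar> \<le> M"
    by (rule exI[of _ R]) (auto simp: bounded_modulus_family_def PiE_iff abs_le_iff)
  show "\<exists>U. openin Z U \<and> z0 \<in> U \<and> (\<forall>f\<in>bounded_modulus_family Z R d. \<forall>z\<in>U. \<bar>f z - f z0\<bar> < e)"
    if "z0 \<in> topspace Z" "e > 0" for z0 and e :: real
    using assms that by (intro bounded_modulus_family_equicontinuous_at) auto
qed

lemma unif_bdd_equicont_subset: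
  "unif_bdd_equicont Z F \<Longrightarrow> G \<subseteq> F \<Longrightarrow> unif_bdd_equicont Z G"
  unfolding unif_bdd_equicont_def by (meson subsetD order_trans)

lemma Tp_closure_of_bounded_modulus_family:
  assumes F: "F \<subseteq> bounded_modulus_family Z R d"
    and d: "\<forall>z0\<in>topspace Z. limitin euclideanreal (\<lambda>z. d z z0) 0 (atin Z z0)"
  shows "F \<subseteq> Cb Z \<and> unif_bdd_equicont Z (Tp Z closure_of F) \<and> compactin (Tp Z) (Tp Z closure_of F)"
proof -
  define P where "P = product_topology (\<lambda>_. euclideanreal) (topspace Z)"
  define K where "K = bounded_modulus_family Z R d"
  have KCb: "K \<subseteq> Cb Z"
    unfolding K_def using bounded_modulus_family_subset_Cb d .
  have PK: "P closure_of F \<subseteq> K"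
    unfolding P_def K_def using F closedin_bounded_modulus_family by (rule closure_of_minimal)
  have FCb: "F \<subseteq> Cb Z" and PCb: "P closure_of F \<subseteq> Cb Z"
    using F PK KCb unfolding K_def by auto
  have cl: "Tp Z closure_of F = P closure_of F"
    using FCb PCb by (simp add: Tp_def P_def[symmetric] closure_of_subtopology Int_absorb1)
  have "unif_bdd_equicont Z (Tp Z closure_of F)"
    using unif_bdd_equicont_bounded_modulus_family[OF d] PK
    unfolding cl K_def by (rule unif_bdd_equicont_subset)
  moreover have "compactin P (P closure_of F)"
    using compactin_bounded_modulus_family PK closedin_closure_of
    unfolding P_def K_def by (rule closed_compactin)
  then have "compactin (Tp Z) (Tp Z closure_of F)"
    using PCb unfolding cl by (simp add: Tp_def P_def[symmetric] compactin_subtopology)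
  ultimately show ?thesis
    using FCb by blast
qed

lemma Tp_closure_of_constant_family:
  assumes "F \<subseteq> {\<lambda>z\<in>topspace Z. k}"
  shows "F \<subseteq> Cb Z \<and> unif_bdd_equicont Z (Tp Z closure_of F) \<and> compactin (Tp Z) (Tp Z closure_of F)"
  by (rule Tp_closure_of_bounded_modulus_family[where R="\<bar>k\<bar>" and d="\<lambda>_ _. 0"])
    (auto simp: bounded_modulus_family_def dest!: subsetD[OF assms])

lemma cINF_le_cINF_add:
  fixes f g :: "'a \<Rightarrow> real"
  assumes "S \<noteq> {}" and "bdd_below (f ` S)" and "\<forall>s\<in>S. f s \<le> g s + D"
  shows "(INF s\<in>S. f s) \<le> (INF s\<in>S. g s) + D"
proof -
  have "(INF s\<in>S. f s) - D \<le> (INF s\<in>S. g s)"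
  proof (rule cINF_greatest)
    fix s assume "s \<in> S"
    with assms show "(INF s\<in>S. f s) - D \<le> g s"
      using cINF_lower2[of f S s "g s + D"] by auto
  qed (use assms in auto)
  then show ?thesis by simp
qed

lemma abs_cINF_diff_le:
  fixes f g :: "'a \<Rightarrow> real"
  assumes "S \<noteq> {}" and "bdd_below (f ` S)" and "bdd_below (g ` S)" and "\<forall>s\<in>S. \<bar>f s - g s\<bar> \<le> D"
  shows "\<bar>(INF s\<in>S. f s) - (INF s\<in>S. g s)\<bar> \<le> D"
proof -
  have "\<forall>s\<in>S. f s \<le> g s + D" and "\<forall>s\<in>S. g s \<le> f s + D"
    using assms(4) by (auto simp: abs_le_iff)
  with assms(1-3) show ?thesis
    using cINF_le_cINF_add[of S f g D] cINF_le_cINF_add[of S g f D] by (auto simp: abs_le_iff)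
qed

lemma cINF_add_const:
  fixes f :: "'a \<Rightarrow> real"
  assumes "S \<noteq> {}" and "bdd_below (f ` S)"
  shows "(INF s\<in>S. f s + k) = (INF s\<in>S. f s) + k"
proof -
  obtain m where "\<forall>s\<in>S. m \<le> f s"
    using assms(2) by (auto simp: bdd_below_def)
  then have "bdd_below ((\<lambda>s. f s + k) ` S)"
    by (auto simp: bdd_below_def intro!: exI[of _ "m + k"])
  then show ?thesis
    using cINF_le_cINF_add[of S "\<lambda>s. f s + k" f k] cINF_le_cINF_add[of S f "\<lambda>s. f s + k" "-k"] assms
    by auto
qed

lemma cINF_oscillation_bounds:
  fixes f :: "'a \<Rightarrow> real"
  assumes "s \<in> S" and "\<forall>s\<in>S. \<forall>t\<in>S. f s \<le> f t + D"
  shows "(INF t\<in>S. f t) \<le> f s" and "f s \<le> (INF t\<in>S. f t) + D"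
proof -
  have lower: "\<forall>t\<in>S. f s - D \<le> f t"
    using assms by (simp add: diff_le_eq)
  then have "bdd_below (f ` S)"
    by (auto simp: bdd_below_def)
  with assms(1) show "(INF t\<in>S. f t) \<le> f s"
    by (rule cINF_lower[rotated])
  from lower assms(1) have "f s - D \<le> (INF t\<in>S. f t)"
    by (intro cINF_greatest) auto
  then show "f s \<le> (INF t\<in>S. f t) + D" by simp
qed

lemma ctrans_eq: "y \<in> topspace Y \<Longrightarrow> ctrans X Y c \<xi> y = (INF x\<in>topspace X. c x y - \<xi> x)"
  by (simp add: ctrans_def Setcompr_eq_image)

lemma cbtrans_eq_ctrans: "cbtrans X Y c = ctrans Y X (\<lambda>y x. c x y)"
  by (simp add: fun_eq_iff cbtrans_def ctrans_def)

lemma dbar_eq_dunder: "dbar Y c = dunder Y (\<lambda>y x. c x y)"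
  by (simp add: fun_eq_iff dbar_def dunder_def)

lemma abs_diff_le_dunder:
  assumes "\<forall>x\<in>topspace X. \<forall>y\<in>topspace Y. \<bar>c x y\<bar> \<le> M"
    and "x \<in> topspace X" and "y \<in> topspace Y" and "y' \<in> topspace Y"
  shows "\<bar>c x y - c x y'\<bar> \<le> dunder X c y y'"
  unfolding dunder_def
proof (rule cSup_upper)
  have "\<bar>c x' y - c x' y'\<bar> \<le> 2 * M" if "x' \<in> topspace X" for x'
    using assms(1) that assms(3,4) by (smt (verit))
  then show "bdd_above {\<bar>c x y - c x y'\<bar> |x. x \<in> topspace X}"
    by (auto simp: bdd_above_def)
qed (use assms(2) in blast)

context
  fixes X :: "'a topology" and Y :: "'b topology" and c :: "'a \<Rightarrow> 'b \<Rightarrow> real" and \<xi> :: "'a \<Rightarrow> real"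
    and M P :: real
  assumes X_ne: "topspace X \<noteq> {}"
    and c_bound: "\<forall>x\<in>topspace X. \<forall>y\<in>topspace Y. \<bar>c x y\<bar> \<le> M"
    and \<xi>_bound: "\<forall>x\<in>topspace X. \<bar>\<xi> x\<bar> \<le> P"
begin

lemma bdd_below_ctrans_image:
  assumes "y \<in> topspace Y"
  shows "bdd_below ((\<lambda>x. c x y - \<xi> x) ` topspace X)"
proof -
  have "- M - P \<le> c x y - \<xi> x" if "x \<in> topspace X" for x
    using c_bound \<xi>_bound that assms by (smt (verit))
  then show ?thesis by (auto simp: bdd_below_def)
qed

lemma abs_ctrans_le:
  assumes "y \<in> topspace Y"
  shows "\<bar>ctrans X Y c \<xi> y\<bar> \<le> M + P"
proof -
  have bound: "\<bar>c x y - \<xi> x\<bar> \<le> M + P" if "x \<in> topspace X" for x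
    using c_bound \<xi>_bound that assms by (smt (verit))
  obtain x0 where x0: "x0 \<in> topspace X"
    using X_ne by blast
  have "(INF x\<in>topspace X. c x y - \<xi> x) \<le> c x0 y - \<xi> x0"
    using bdd_below_ctrans_image[OF assms] x0 by (rule cINF_lower)
  moreover have "- (M + P) \<le> (INF x\<in>topspace X. c x y - \<xi> x)"
    using X_ne bound by (intro cINF_greatest) (force simp: abs_le_iff)+
  ultimately show ?thesis
    using bound[OF x0] by (simp add: ctrans_eq[OF assms] abs_le_iff)
qed

lemma abs_ctrans_diff_le:
  assumes "y \<in> topspace Y" and "y' \<in> topspace Y" and "\<forall>x\<in>topspace X. \<bar>c x y - c x y'\<bar> \<le> D"
  shows "\<bar>ctrans X Y c \<xi> y - ctrans X Y c \<xi> y'\<bar> \<le> D"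
  unfolding ctrans_eq[OF assms(1)] ctrans_eq[OF assms(2)]
  using X_ne bdd_below_ctrans_image[OF assms(1)] bdd_below_ctrans_image[OF assms(2)] assms(3)
  by (intro abs_cINF_diff_le) auto

lemma normalized_ctrans_in_bounded_modulus_family:
  "(\<lambda>y\<in>topspace Y. ctrans X Y c \<xi> y - (INF y'\<in>topspace Y. ctrans X Y c \<xi> y'))
     \<in> bounded_modulus_family Y (2 * M) (dunder X c)"
proof -
  define \<psi> where "\<psi> = ctrans X Y c \<xi>"
  have osc: "\<forall>y\<in>topspace Y. \<forall>y'\<in>topspace Y. \<psi> y \<le> \<psi> y' + 2 * M"
  proof (intro ballI)
    fix y y' assume y: "y \<in> topspace Y" and y': "y' \<in> topspace Y"
    have "\<forall>x\<in>topspace X. \<bar>c x y - c x y'\<bar> \<le> 2 * M"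
      using c_bound y y' by (smt (verit))
    from abs_ctrans_diff_le[OF y y' this] show "\<psi> y \<le> \<psi> y' + 2 * M"
      by (simp add: \<psi>_def abs_le_iff)
  qed
  have "\<bar>\<psi> y - \<psi> y0\<bar> \<le> dunder X c y y0" if "y \<in> topspace Y" "y0 \<in> topspace Y" for y y0
    unfolding \<psi>_def using that abs_diff_le_dunder[OF c_bound _ that]
    by (intro abs_ctrans_diff_le) auto
  moreover have "- (2 * M) \<le> \<psi> y - (INF y'\<in>topspace Y. \<psi> y') \<and> \<psi> y - (INF y'\<in>topspace Y. \<psi> y') \<le> 2 * M"
    if "y \<in> topspace Y" for y
    using cINF_oscillation_bounds[OF that osc] by linarith
  ultimately show ?thesis
    by (auto simp: bounded_modulus_family_def \<psi>_def)
qed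

end

lemma ccbar_in_bounded_modulus_family:
  assumes X_ne: "topspace X \<noteq> {}" and Y_ne: "topspace Y \<noteq> {}"
    and c_bound: "\<forall>x\<in>topspace X. \<forall>y\<in>topspace Y. \<bar>c x y\<bar> \<le> M"
    and \<xi>_bound: "\<forall>x\<in>topspace X. \<bar>\<xi> x\<bar> \<le> P"
  shows "(\<lambda>x\<in>topspace X. cbtrans X Y c (ctrans X Y c \<xi>) x + (INF y\<in>topspace Y. ctrans X Y c \<xi> y))
     \<in> bounded_modulus_family X (3 * M) (dbar Y c)"
proof -
  define \<psi> where "\<psi> = ctrans X Y c \<xi>"
  define m where "m = (INF y\<in>topspace Y. \<psi> y)"
  define \<beta> where "\<beta> = (\<lambda>y\<in>topspace Y. \<psi> y - m)"
  have c_bound': "\<forall>y\<in>topspace Y. \<forall>x\<in>topspace X. \<bar>c x y\<bar> \<le> M"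
    using c_bound by blast
  have "\<beta> \<in> bounded_modulus_family Y (2 * M) (dunder X c)"
    unfolding \<beta>_def m_def \<psi>_def
    using normalized_ctrans_in_bounded_modulus_family[OF X_ne c_bound \<xi>_bound] .
  then have \<beta>_bound: "\<forall>y\<in>topspace Y. \<bar>\<beta> y\<bar> \<le> 2 * M"
    by (auto simp: bounded_modulus_family_def PiE_iff abs_le_iff)
  note flipped = abs_ctrans_le[OF Y_ne c_bound' \<beta>_bound] abs_ctrans_diff_le[OF Y_ne c_bound' \<beta>_bound]
  have \<psi>_bound: "\<forall>y\<in>topspace Y. \<bar>\<psi> y\<bar> \<le> M + P"
    unfolding \<psi>_def using abs_ctrans_le[OF X_ne c_bound \<xi>_bound] by blast
  have shift: "cbtrans X Y c \<beta> x = cbtrans X Y c \<psi> x + m" if x: "x \<in> topspace X" for x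
  proof -
    have "cbtrans X Y c \<beta> x = (INF y\<in>topspace Y. (c x y - \<psi> y) + m)"
      by (simp add: cbtrans_eq_ctrans ctrans_eq[OF x] \<beta>_def algebra_simps)
    also have "\<dots> = (INF y\<in>topspace Y. c x y - \<psi> y) + m"
      using Y_ne bdd_below_ctrans_image[OF Y_ne c_bound' \<psi>_bound x] by (rule cINF_add_const)
    finally show ?thesis
      by (simp add: cbtrans_eq_ctrans ctrans_eq[OF x])
  qed
  have "cbtrans X Y c \<psi> x + m \<in> {- (3 * M)..3 * M}" if "x \<in> topspace X" for x
    using flipped(1)[OF that] shift[OF that] by (simp add: cbtrans_eq_ctrans abs_le_iff)
  moreover have "\<bar>(cbtrans X Y c \<psi> x + m) - (cbtrans X Y c \<psi> x0 + m)\<bar> \<le> dbar Y c x x0"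
    if "x \<in> topspace X" "x0 \<in> topspace X" for x x0
    using flipped(2)[OF that] abs_diff_le_dunder[OF c_bound' _ that] shift[OF that(1)] shift[OF that(2)]
    by (simp add: cbtrans_eq_ctrans dbar_eq_dunder)
  ultimately show ?thesis
    unfolding bounded_modulus_family_def m_def \<psi>_def by auto
qed

theorem mainTheorem2:
  fixes X :: "'a topology" and Y :: "'b topology" and c :: "'a \<Rightarrow> 'b \<Rightarrow> real"
  assumes "completely_regular_space X" and "Hausdorff_space X"
    and "completely_regular_space Y" and "Hausdorff_space Y"
    and "\<exists>M. \<forall>x\<in>topspace X. \<forall>y\<in>topspace Y. \<bar>c x y\<bar> \<le> M"
    and "propH X Y c"
  defines "A \<equiv> {(\<lambda>x\<in>topspace X. cbtrans X Y c (ctrans X Y c \<phi>) x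
                     + Inf (ctrans X Y c \<phi> ` topspace Y)) | \<phi>. \<phi> \<in> Cb X}"
    and "B \<equiv> {(\<lambda>y\<in>topspace Y. ctrans X Y c \<phi> y
                     - Inf (ctrans X Y c \<phi> ` topspace Y)) | \<phi>. \<phi> \<in> Cb X}"
  shows "A \<subseteq> Cb X \<and> B \<subseteq> Cb Y
    \<and> unif_bdd_equicont X (Tp X closure_of A)
    \<and> unif_bdd_equicont Y (Tp Y closure_of B)
    \<and> compactin (Tp X) (Tp X closure_of A)
    \<and> compactin (Tp Y) (Tp Y closure_of B)
    \<and> compactin (prod_topology (Tp X) (Tp Y)) ((Tp X closure_of A) \<times> (Tp Y closure_of B))"
proof -
  obtain M where c_bound: "\<forall>x\<in>topspace X. \<forall>y\<in>topspace Y. \<bar>c x y\<bar> \<le> M"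
    using assms(5) by blast
  have bounded: "\<exists>P. \<forall>x\<in>topspace X. \<bar>\<phi> x\<bar> \<le> P" if "\<phi> \<in> Cb X" for \<phi>
    using that by (simp add: Cb_def)
  have A: "A \<subseteq> Cb X \<and> unif_bdd_equicont X (Tp X closure_of A) \<and> compactin (Tp X) (Tp X closure_of A)"
  proof (cases "topspace X = {} \<or> topspace Y = {}")
    case True
    then have "A \<subseteq> {\<lambda>x\<in>topspace X. Inf {} + Inf {}}"
      by (auto simp: A_def cbtrans_def)
    then show ?thesis by (rule Tp_closure_of_constant_family)
  next
    case False
    then have "A \<subseteq> bounded_modulus_family X (3 * M) (dbar Y c)"
      unfolding A_def using ccbar_in_bounded_modulus_family[OF _ _ c_bound] bounded by blast
    then show ?thesis
      using assms(6) by (intro Tp_closure_of_bounded_modulus_family) (auto simp: propH_def)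
  qed
  have B: "B \<subseteq> Cb Y \<and> unif_bdd_equicont Y (Tp Y closure_of B) \<and> compactin (Tp Y) (Tp Y closure_of B)"
  proof (cases "topspace X = {}")
    case True
    then have "B \<subseteq> {\<lambda>y\<in>topspace Y. Inf {} - Inf ((\<lambda>_. Inf {}) ` topspace Y)}"
      by (auto simp: B_def ctrans_def)
    then show ?thesis by (rule Tp_closure_of_constant_family)
  next
    case False
    then have "B \<subseteq> bounded_modulus_family Y (2 * M) (dunder X c)"
      unfolding B_def using normalized_ctrans_in_bounded_modulus_family[OF _ c_bound] bounded by blast
    then show ?thesis
      using assms(6) by (intro Tp_closure_of_bounded_modulus_family) (auto simp: propH_def)
  qed
  show ?thesis
    using A B by (simp add: compactin_Times)
qed

end
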